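(* Let $X\times G\to X$ be a Bourbaki-proper continuous right action of a locally compact Hausdorff group on a Hausdorff space, with quotient map $\pi\colon X\to X/G$, and let $F\subseteq X$ be a closed subset such that the action is $F$-proper. If $F$ is paracompact, then so is $\pi(F)$.
   Context: For $A,B\subseteq X$ set $\langle A:B\rangle:=\{g\in G: Bg\cap A\neq\emptyset\}$ and write $A\perp B$ if it is relatively compact in $G$. The action is Bourbaki-proper if for all $x,x'\in X$ there are neighborhoods $V_x\ni x$, $V_{x'}\ni x'$ with $V_{x'}\perp V_x$. For closed $F$, it is $F$-proper if for every $x\in X$ there are neighborhoods $V_x\ni x$ and $V_F\supseteq F$ with $V_F\perp V_x$. *)

theory Defs
  imports "HOL-Analysis.Analysis"
begin

text \<open>Paracompactness of an (abstract) topological space: every open cover has a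
  locally finite open refinement (no separation axiom built in).\<close>
definition paracompact_space :: "'a topology \<Rightarrow> bool" where
  "paracompact_space T \<longleftrightarrow>
     (\<forall>\<U>. (\<forall>U\<in>\<U>. openin T U) \<and> topspace T \<subseteq> \<Union>\<U> \<longrightarrow>
        (\<exists>\<V>. (\<forall>V\<in>\<V>. openin T V) \<and> topspace T \<subseteq> \<Union>\<V> \<and>
              (\<forall>V\<in>\<V>. \<exists>U\<in>\<U>. V \<subseteq> U) \<and> locally_finite_in T \<V>))"

text \<open>Continuous right action of a topological group (written additively,
  not necessarily commutative) on a space: x.0 = x, (x.g).h = x.(g+h).\<close>
definition cont_right_action :: "('x::topological_space \<Rightarrow> 'g::topological_group_add \<Rightarrow> 'x) \<Rightarrow> bool" where
  "cont_right_action act \<longleftrightarrow>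
     (\<forall>x. act x 0 = x) \<and> (\<forall>x g h. act (act x g) h = act x (g + h)) \<and>
     continuous_on UNIV (\<lambda>(x, g). act x g)"

definition transporter :: "('x \<Rightarrow> 'g \<Rightarrow> 'x) \<Rightarrow> 'x set \<Rightarrow> 'x set \<Rightarrow> 'g set" where
  "transporter act A B = {g. (\<lambda>x. act x g) ` B \<inter> A \<noteq> {}}"

definition perp :: "('x \<Rightarrow> 'g::topological_space \<Rightarrow> 'x) \<Rightarrow> 'x set \<Rightarrow> 'x set \<Rightarrow> bool" where
  "perp act A B \<longleftrightarrow> compact (closure (transporter act A B))"

definition bourbaki_proper :: "('x::topological_space \<Rightarrow> 'g::topological_space \<Rightarrow> 'x) \<Rightarrow> bool" where
  "bourbaki_proper act \<longleftrightarrow>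
     (\<forall>x x'. \<exists>Vx Vx'. open Vx \<and> x \<in> Vx \<and> open Vx' \<and> x' \<in> Vx' \<and> perp act Vx' Vx)"

definition F_proper :: "('x::topological_space \<Rightarrow> 'g::topological_space \<Rightarrow> 'x) \<Rightarrow> 'x set \<Rightarrow> bool" where
  "F_proper act F \<longleftrightarrow>
     (\<forall>x. \<exists>Vx VF. open Vx \<and> x \<in> Vx \<and> open VF \<and> F \<subseteq> VF \<and> perp act VF Vx)"

text \<open>Orbit space X/G: points are orbits, \<pi> x = xG, quotient topology.\<close>
definition orbit_map :: "('x \<Rightarrow> 'g \<Rightarrow> 'x) \<Rightarrow> 'x \<Rightarrow> 'x set" where
  "orbit_map act x = range (act x)"

definition orbit_space :: "('x::topological_space \<Rightarrow> 'g \<Rightarrow> 'x) \<Rightarrow> 'x set topology" where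
  "orbit_space act = topology (\<lambda>U. U \<subseteq> range (orbit_map act) \<and> open (orbit_map act -` U))"

end

(* F-properness makes the orbit map, restricted to F, a perfect map onto pi(F): it is closed
   because the saturation CG of a closed C contained in F is closed (a tube-lemma argument over
   the compact closure of a transporter), and its fibres F \<inter> xG equal F \<inter> xK with K compact.
   Perfect images of paracompact Hausdorff spaces are paracompact: such a space is regular, so
   each open cover has a locally finite closed refinement; this property passes to perfect images
   (pull the cover back, push the refinement forward), and by Michael's lemma it implies
   paracompactness. *)

theory Submission
  imports Defs
begin

lemma paracompact_spaceE:
  assumes "paracompact_space X" "\<And>U. U \<in> \<U> \<Longrightarrow> openin X U" "topspace X \<subseteq> \<Union>\<U>"
  obtains \<V> where "\<forall>V\<in>\<V>. openin X V" "topspace X \<subseteq> \<Union>\<V>" "\<forall>V\<in>\<V>. \<exists>U\<in>\<U>. V \<subseteq> U"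
    "locally_finite_in X \<V>"
proof -
  have "\<forall>U\<in>\<U>. openin X U" using assms(2) by simp
  with assms(1,3) have "\<exists>\<V>. (\<forall>V\<in>\<V>. openin X V) \<and> topspace X \<subseteq> \<Union>\<V> \<and>
                        (\<forall>V\<in>\<V>. \<exists>U\<in>\<U>. V \<subseteq> U) \<and> locally_finite_in X \<V>"
    unfolding paracompact_space_def by blast
  then show thesis using that by blast
qed

lemma Hausdorff_space_closure_of_separation:
  assumes "Hausdorff_space X" "x \<in> topspace X" "a \<in> topspace X" "x \<noteq> a"
  obtains P where "openin X P" "x \<in> P" "a \<notin> X closure_of P"
proof -
  obtain P Q where "openin X P" "openin X Q" "x \<in> P" "a \<in> Q" "disjnt P Q"
    using assms unfolding Hausdorff_space_def by metis
  moreover from this have "a \<notin> X closure_of P" by (metis disjnt_iff in_closure_of)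
  ultimately show thesis using that by blast
qed

lemma paracompact_Hausdorff_imp_regular_space:
  assumes P: "paracompact_space X" and H: "Hausdorff_space X"
  shows "regular_space X"
  unfolding regular_space
proof (intro allI impI)
  fix C a assume Ca: "closedin X C \<and> a \<in> topspace X - C"
  define \<U> where "\<U> = insert (topspace X - C) {P. openin X P \<and> a \<notin> X closure_of P}"
  have cover: "topspace X \<subseteq> \<Union>\<U>"
  proof
    fix x assume x: "x \<in> topspace X"
    show "x \<in> \<Union>\<U>"
    proof (cases "x \<in> C")
      case True
      with x Ca obtain P where "openin X P" "x \<in> P" "a \<notin> X closure_of P"
        by (metis H DiffE Hausdorff_space_closure_of_separation)
      then show ?thesis by (auto simp: \<U>_def)
    qed (use x in \<open>auto simp: \<U>_def\<close>)
  qed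
  have "openin X U" if "U \<in> \<U>" for U
    using that Ca by (auto simp: \<U>_def)
  then obtain \<V> where opV: "\<forall>V\<in>\<V>. openin X V" and covV: "topspace X \<subseteq> \<Union>\<V>"
    and refV: "\<forall>V\<in>\<V>. \<exists>U\<in>\<U>. V \<subseteq> U" and lfV: "locally_finite_in X \<V>"
    by (rule paracompact_spaceE[OF P _ cover])
  define W where "W = \<Union>{V \<in> \<V>. V \<inter> C \<noteq> {}}"
  have "C \<subseteq> W"
    using covV Ca closedin_subset unfolding W_def by fastforce
  have "openin X W" using opV unfolding W_def by auto
  \<comment> \<open>A member of \<V> meeting C refines a set whose closure misses a, and the closure of
      a locally finite union is the union of the closures.\<close>
  have aW: "a \<notin> X closure_of W"
  proof
    assume "a \<in> X closure_of W"
    moreover have "locally_finite_in X {V \<in> \<V>. V \<inter> C \<noteq> {}}"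
      by (rule locally_finite_in_subset[OF lfV]) auto
    ultimately obtain V where V: "V \<in> \<V>" "V \<inter> C \<noteq> {}" "a \<in> X closure_of V"
      unfolding W_def by (auto simp: closure_of_locally_finite_Union)
    then obtain U where U: "U \<in> \<U>" "V \<subseteq> U" using refV by blast
    with V have "a \<notin> X closure_of U" by (auto simp: \<U>_def)
    with U V show False using closure_of_mono by blast
  qed
  show "\<exists>U. openin X U \<and> a \<in> U \<and> disjnt C (X closure_of U)"
  proof (intro exI conjI)
    show "openin X (topspace X - X closure_of W)" by (simp add: openin_diff)
    show "a \<in> topspace X - X closure_of W" using Ca aW by auto
    have "X closure_of (topspace X - X closure_of W) \<subseteq> topspace X - W"
      using closure_of_subset[OF openin_subset[OF \<open>openin X W\<close>]]
      by (intro closure_of_minimal closedin_diff closedin_topspace \<open>openin X W\<close>) blast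
    with \<open>C \<subseteq> W\<close> show "disjnt C (X closure_of (topspace X - X closure_of W))"
      by (auto simp: disjnt_def)
  qed
qed

definition closed_refinement_space :: "'a topology \<Rightarrow> bool" where
  "closed_refinement_space X \<longleftrightarrow>
     (\<forall>\<U>. (\<forall>U\<in>\<U>. openin X U) \<and> topspace X \<subseteq> \<Union>\<U> \<longrightarrow>
        (\<exists>\<C>. (\<forall>C\<in>\<C>. closedin X C) \<and> topspace X \<subseteq> \<Union>\<C> \<and>
              (\<forall>C\<in>\<C>. \<exists>U\<in>\<U>. C \<subseteq> U) \<and> locally_finite_in X \<C>))"

lemma closed_refinement_spaceE:
  assumes "closed_refinement_space X" "\<And>U. U \<in> \<U> \<Longrightarrow> openin X U" "topspace X \<subseteq> \<Union>\<U>"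
  obtains \<C> where "\<forall>C\<in>\<C>. closedin X C" "topspace X \<subseteq> \<Union>\<C>" "\<forall>C\<in>\<C>. \<exists>U\<in>\<U>. C \<subseteq> U"
    "locally_finite_in X \<C>"
proof -
  have "\<forall>U\<in>\<U>. openin X U" using assms(2) by simp
  with assms(1,3) have "\<exists>\<C>. (\<forall>C\<in>\<C>. closedin X C) \<and> topspace X \<subseteq> \<Union>\<C> \<and>
                        (\<forall>C\<in>\<C>. \<exists>U\<in>\<U>. C \<subseteq> U) \<and> locally_finite_in X \<C>"
    unfolding closed_refinement_space_def by blast
  then show thesis using that by blast
qed

lemma paracompact_regular_imp_closed_refinement_space:
  assumes P: "paracompact_space X" and R: "regular_space X"
  shows "closed_refinement_space X"
  unfolding closed_refinement_space_def
proof (intro allI impI)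
  fix \<U> assume "(\<forall>U\<in>\<U>. openin X U) \<and> topspace X \<subseteq> \<Union>\<U>"
  then have op: "\<And>U. U \<in> \<U> \<Longrightarrow> openin X U" and cov: "topspace X \<subseteq> \<Union>\<U>" by auto
  define \<W> where "\<W> = {W. openin X W \<and> (\<exists>U\<in>\<U>. X closure_of W \<subseteq> U)}"
  have cover: "topspace X \<subseteq> \<Union>\<W>"
  proof
    fix x assume "x \<in> topspace X"
    then obtain U where "U \<in> \<U>" "x \<in> U" using cov by blast
    moreover have "neighbourhood_base_of (closedin X) X"
      using R by (simp add: neighbourhood_base_of_closedin)
    ultimately obtain W C where "openin X W" "closedin X C" "x \<in> W" "W \<subseteq> C" "C \<subseteq> U"
      using op unfolding neighbourhood_base_of by meson
    then have "X closure_of W \<subseteq> U" by (meson closure_of_minimal order_trans)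
    with \<open>U \<in> \<U>\<close> \<open>openin X W\<close> \<open>x \<in> W\<close> show "x \<in> \<Union>\<W>" by (auto simp: \<W>_def)
  qed
  have "openin X W" if "W \<in> \<W>" for W
    using that by (simp add: \<W>_def)
  then obtain \<V> where opV: "\<forall>V\<in>\<V>. openin X V" and "topspace X \<subseteq> \<Union>\<V>"
    and refV: "\<forall>V\<in>\<V>. \<exists>W\<in>\<W>. V \<subseteq> W" and "locally_finite_in X \<V>"
    by (rule paracompact_spaceE[OF P _ cover])
  have "topspace X \<subseteq> \<Union>((closure_of) X ` \<V>)"
  proof
    fix x assume "x \<in> topspace X"
    then obtain V where "V \<in> \<V>" "x \<in> V" using \<open>topspace X \<subseteq> \<Union>\<V>\<close> by blast
    then show "x \<in> \<Union>((closure_of) X ` \<V>)"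
      using closure_of_subset[OF openin_subset] opV by blast
  qed
  moreover have "\<exists>U\<in>\<U>. C \<subseteq> U" if "C \<in> (closure_of) X ` \<V>" for C
  proof -
    obtain V W U where "C = X closure_of V" "V \<subseteq> W" "U \<in> \<U>" "X closure_of W \<subseteq> U"
      using \<open>C \<in> (closure_of) X ` \<V>\<close> refV unfolding \<W>_def by blast
    then show ?thesis by (meson closure_of_mono order_trans)
  qed
  moreover have "locally_finite_in X ((closure_of) X ` \<V>)"
    using \<open>locally_finite_in X \<V>\<close> by (rule locally_finite_in_closure)
  ultimately show "\<exists>\<C>. (\<forall>C\<in>\<C>. closedin X C) \<and> topspace X \<subseteq> \<Union>\<C> \<and>
                     (\<forall>C\<in>\<C>. \<exists>U\<in>\<U>. C \<subseteq> U) \<and> locally_finite_in X \<C>"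
    by (intro exI[of _ "(closure_of) X ` \<V>"]) auto
qed

lemma compactin_locally_finite_in_neighbourhood:
  assumes K: "compactin X K" and lf: "locally_finite_in X \<A>"
  obtains N where "openin X N" "K \<subseteq> N" "finite {A \<in> \<A>. A \<inter> N \<noteq> {}}"
proof -
  define \<N> where "\<N> = {N. openin X N \<and> finite {A \<in> \<A>. A \<inter> N \<noteq> {}}}"
  have "K \<subseteq> \<Union>\<N>"
    using lf compactin_subset_topspace[OF K] unfolding locally_finite_in_def \<N>_def by blast
  then obtain \<S> where S: "finite \<S>" "\<S> \<subseteq> \<N>" "K \<subseteq> \<Union>\<S>"
    using K unfolding compactin_def \<N>_def by (metis (no_types, lifting) mem_Collect_eq)
  have "{A \<in> \<A>. A \<inter> \<Union>\<S> \<noteq> {}} = (\<Union>N\<in>\<S>. {A \<in> \<A>. A \<inter> N \<noteq> {}})" by blast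
  with S have "finite {A \<in> \<A>. A \<inter> \<Union>\<S> \<noteq> {}}" by (auto simp: \<N>_def)
  moreover have "openin X (\<Union>\<S>)" using S(2) by (auto simp: \<N>_def)
  ultimately show thesis using S(3) that by blast
qed

lemma locally_finite_in_proper_map_image:
  assumes f: "proper_map X Y f" and lf: "locally_finite_in X \<A>"
  shows "locally_finite_in Y ((`) f ` \<A>)"
  unfolding locally_finite_in_def
proof (intro conjI ballI)
  have cm: "closed_map X Y f" using f by (rule proper_imp_closed_map)
  then have "f \<in> topspace X \<rightarrow> topspace Y" by (simp add: closed_map_fibre_neighbourhood)
  with lf show "\<Union>((`) f ` \<A>) \<subseteq> topspace Y" by (fastforce simp: locally_finite_in_def)
  fix y assume y: "y \<in> topspace Y"
  then have "compactin X {x \<in> topspace X. f x = y}" using f by (simp add: proper_map_def)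
  then obtain O' where O': "openin X O'" "{x \<in> topspace X. f x = y} \<subseteq> O'"
    and fin: "finite {A \<in> \<A>. A \<inter> O' \<noteq> {}}"
    using lf by (rule compactin_locally_finite_in_neighbourhood)
  obtain N where N: "openin Y N" "y \<in> N" "{x \<in> topspace X. f x \<in> N} \<subseteq> O'"
    using cm O' y unfolding closed_map_fibre_neighbourhood by blast
  have "\<Union>\<A> \<subseteq> topspace X" using lf by (simp add: locally_finite_in_def)
  with N have "{B \<in> (`) f ` \<A>. B \<inter> N \<noteq> {}} \<subseteq> (`) f ` {A \<in> \<A>. A \<inter> O' \<noteq> {}}" by blast
  with fin have "finite {B \<in> (`) f ` \<A>. B \<inter> N \<noteq> {}}" by (meson finite_imageI finite_subset)
  with N show "\<exists>N. openin Y N \<and> y \<in> N \<and> finite {B \<in> (`) f ` \<A>. B \<inter> N \<noteq> {}}" by blast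
qed

lemma closed_refinement_space_perfect_map_image:
  assumes X: "closed_refinement_space X" and f: "perfect_map X Y f"
  shows "closed_refinement_space Y"
  unfolding closed_refinement_space_def
proof (intro allI impI)
  fix \<U> assume "(\<forall>U\<in>\<U>. openin Y U) \<and> topspace Y \<subseteq> \<Union>\<U>"
  then have opU: "\<And>U. U \<in> \<U> \<Longrightarrow> openin Y U" and covU: "topspace Y \<subseteq> \<Union>\<U>" by auto
  have cont: "continuous_map X Y f" and proper: "proper_map X Y f"
    and surj: "f ` topspace X = topspace Y"
    using f by (auto simp: perfect_map_def)
  define \<W> where "\<W> = (\<lambda>U. {x \<in> topspace X. f x \<in> U}) ` \<U>"
  have opW: "openin X W" if "W \<in> \<W>" for W
    using that cont opU openin_continuous_map_preimage unfolding \<W>_def by blast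
  have covW: "topspace X \<subseteq> \<Union>\<W>"
    using covU surj unfolding \<W>_def by blast
  obtain \<C> where clC: "\<forall>C\<in>\<C>. closedin X C" and covC: "topspace X \<subseteq> \<Union>\<C>"
    and refC: "\<forall>C\<in>\<C>. \<exists>W\<in>\<W>. C \<subseteq> W" and lfC: "locally_finite_in X \<C>"
    using closed_refinement_spaceE[OF X opW covW] by blast
  show "\<exists>\<F>. (\<forall>S\<in>\<F>. closedin Y S) \<and> topspace Y \<subseteq> \<Union>\<F> \<and> (\<forall>S\<in>\<F>. \<exists>U\<in>\<U>. S \<subseteq> U) \<and>
            locally_finite_in Y \<F>"
  proof (intro exI[of _ "(`) f ` \<C>"] conjI ballI)
    show "closedin Y S" if "S \<in> (`) f ` \<C>" for S
    proof -
      from that obtain C where "C \<in> \<C>" "S = f ` C" by blast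
      with clC proper_imp_closed_map[OF proper] show ?thesis by (simp add: closed_map_def)
    qed
    show "topspace Y \<subseteq> \<Union>((`) f ` \<C>)"
    proof
      fix y assume "y \<in> topspace Y"
      then obtain x where "x \<in> topspace X" "y = f x" using surj by blast
      moreover from \<open>x \<in> topspace X\<close> obtain C where "C \<in> \<C>" "x \<in> C" using covC by blast
      ultimately show "y \<in> \<Union>((`) f ` \<C>)" by blast
    qed
    show "\<exists>U\<in>\<U>. S \<subseteq> U" if "S \<in> (`) f ` \<C>" for S
    proof -
      from that obtain C where "C \<in> \<C>" "S = f ` C" by blast
      then obtain U where "U \<in> \<U>" "C \<subseteq> {x \<in> topspace X. f x \<in> U}"
        using refC unfolding \<W>_def by blast
      with \<open>S = f ` C\<close> show ?thesis by blast
    qed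
    show "locally_finite_in Y ((`) f ` \<C>)"
      using proper lfC by (rule locally_finite_in_proper_map_image)
  qed
qed

lemma locally_finite_in_enlargement:
  assumes lf: "locally_finite_in Y \<A>" and cov: "topspace Y \<subseteq> \<Union>\<A>"
    and fin: "\<And>A. A \<in> \<A> \<Longrightarrow> finite {S \<in> \<F>. S \<inter> A \<noteq> {}}" and y: "y \<in> topspace Y"
  shows "\<exists>N. openin Y N \<and> y \<in> N \<and>
           finite {S \<in> \<F>. (topspace Y - \<Union>{A \<in> \<A>. A \<inter> S = {}}) \<inter> N \<noteq> {}}"
proof -
  obtain N where N: "openin Y N" "y \<in> N" and finN: "finite {A \<in> \<A>. A \<inter> N \<noteq> {}}"
    using lf y unfolding locally_finite_in_def by blast
  let ?\<S> = "\<Union>A \<in> {A \<in> \<A>. A \<inter> N \<noteq> {}}. {S \<in> \<F>. S \<inter> A \<noteq> {}}"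
  have "{S \<in> \<F>. (topspace Y - \<Union>{A \<in> \<A>. A \<inter> S = {}}) \<inter> N \<noteq> {}} \<subseteq> ?\<S>"
  proof
    fix S assume "S \<in> {S \<in> \<F>. (topspace Y - \<Union>{A \<in> \<A>. A \<inter> S = {}}) \<inter> N \<noteq> {}}"
    then obtain z where z: "S \<in> \<F>" "z \<in> topspace Y" "z \<in> N" "\<forall>A\<in>\<A>. z \<in> A \<longrightarrow> A \<inter> S \<noteq> {}"
      by blast
    then obtain A where "A \<in> \<A>" "z \<in> A" using cov by blast
    with z show "S \<in> ?\<S>" by blast
  qed
  moreover have "finite ?\<S>" using finN fin by auto
  ultimately have "finite {S \<in> \<F>. (topspace Y - \<Union>{A \<in> \<A>. A \<inter> S = {}}) \<inter> N \<noteq> {}}"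
    by (rule finite_subset)
  with N show ?thesis by blast
qed

lemma locally_finite_open_expansion:
  assumes Y: "closed_refinement_space Y" and lf: "locally_finite_in Y \<F>"
  obtains E where "\<forall>S. openin Y (E S)" "\<forall>S\<in>\<F>. S \<subseteq> E S"
    "\<forall>y\<in>topspace Y. \<exists>N. openin Y N \<and> y \<in> N \<and> finite {S \<in> \<F>. E S \<inter> N \<noteq> {}}"
proof -
  define \<O> where "\<O> = {N. openin Y N \<and> finite {S \<in> \<F>. S \<inter> N \<noteq> {}}}"
  have opO: "\<And>N. N \<in> \<O> \<Longrightarrow> openin Y N" by (simp add: \<O>_def)
  have covO: "topspace Y \<subseteq> \<Union>\<O>" using lf unfolding locally_finite_in_def \<O>_def by blast
  obtain \<A> where clA: "\<forall>A\<in>\<A>. closedin Y A" and covA: "topspace Y \<subseteq> \<Union>\<A>"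
    and refA: "\<forall>A\<in>\<A>. \<exists>N\<in>\<O>. A \<subseteq> N" and lfA: "locally_finite_in Y \<A>"
    by (rule closed_refinement_spaceE[OF Y opO covO])
  have finA: "finite {S \<in> \<F>. S \<inter> A \<noteq> {}}" if A: "A \<in> \<A>" for A
  proof -
    obtain N where "N \<in> \<O>" "A \<subseteq> N" using refA A by blast
    then have "finite {S \<in> \<F>. S \<inter> N \<noteq> {}}" by (simp add: \<O>_def)
    moreover have "{S \<in> \<F>. S \<inter> A \<noteq> {}} \<subseteq> {S \<in> \<F>. S \<inter> N \<noteq> {}}"
      using \<open>A \<subseteq> N\<close> by blast
    ultimately show ?thesis by (rule rev_finite_subset)
  qed
  \<comment> \<open>Since each member of \<A> meets only finitely many S, a neighbourhood meeting finitely many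
      members of \<A> meets only finitely many of the enlargements E S.\<close>
  define E where "E S = topspace Y - \<Union>{A \<in> \<A>. A \<inter> S = {}}" for S
  show thesis
  proof (intro that allI ballI)
    show "openin Y (E S)" for S
    proof -
      have "locally_finite_in Y {A \<in> \<A>. A \<inter> S = {}}"
        by (rule locally_finite_in_subset[OF lfA]) auto
      then have "closedin Y (\<Union>{A \<in> \<A>. A \<inter> S = {}})"
        by (rule closedin_locally_finite_Union[rotated]) (use clA in auto)
      then show ?thesis unfolding E_def by (simp add: openin_diff)
    qed
    show "S \<subseteq> E S" if "S \<in> \<F>" for S
      using lf that unfolding locally_finite_in_def E_def by blast
    show "\<exists>N. openin Y N \<and> y \<in> N \<and> finite {S \<in> \<F>. E S \<inter> N \<noteq> {}}"
      if "y \<in> topspace Y" for y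
      unfolding E_def by (rule locally_finite_in_enlargement[OF lfA covA finA that])
  qed
qed

lemma closed_refinement_imp_paracompact_space:
  assumes Y: "closed_refinement_space Y"
  shows "paracompact_space Y"
  unfolding paracompact_space_def
proof (intro allI impI)
  fix \<U> assume "(\<forall>U\<in>\<U>. openin Y U) \<and> topspace Y \<subseteq> \<Union>\<U>"
  then have opU: "\<And>U. U \<in> \<U> \<Longrightarrow> openin Y U" and covU: "topspace Y \<subseteq> \<Union>\<U>" by auto
  obtain \<F> where "\<forall>S\<in>\<F>. closedin Y S" and covF: "topspace Y \<subseteq> \<Union>\<F>"
    and refF: "\<forall>S\<in>\<F>. \<exists>U\<in>\<U>. S \<subseteq> U" and lfF: "locally_finite_in Y \<F>"
    by (rule closed_refinement_spaceE[OF Y opU covU])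
  obtain E where opE: "\<forall>S. openin Y (E S)" and SE: "\<forall>S\<in>\<F>. S \<subseteq> E S"
    and lfE: "\<forall>y\<in>topspace Y. \<exists>N. openin Y N \<and> y \<in> N \<and> finite {S \<in> \<F>. E S \<inter> N \<noteq> {}}"
    by (rule locally_finite_open_expansion[OF Y lfF])
  have "\<forall>S\<in>\<F>. \<exists>U. U \<in> \<U> \<and> S \<subseteq> U" using refF by blast
  then obtain u where u: "\<forall>S\<in>\<F>. u S \<in> \<U> \<and> S \<subseteq> u S" by (auto dest!: bchoice)
  define \<V> where "\<V> = (\<lambda>S. E S \<inter> u S) ` \<F>"
  have "locally_finite_in Y \<V>"
    unfolding locally_finite_in_def
  proof (intro conjI ballI)
    show "\<Union>\<V> \<subseteq> topspace Y" using opE openin_subset unfolding \<V>_def by blast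
    fix y assume "y \<in> topspace Y"
    then obtain N where N: "openin Y N" "y \<in> N" and fin: "finite {S \<in> \<F>. E S \<inter> N \<noteq> {}}"
      using lfE by blast
    have "{V \<in> \<V>. V \<inter> N \<noteq> {}} \<subseteq> (\<lambda>S. E S \<inter> u S) ` {S \<in> \<F>. E S \<inter> N \<noteq> {}}"
      unfolding \<V>_def by blast
    with fin have "finite {V \<in> \<V>. V \<inter> N \<noteq> {}}" by (meson finite_imageI finite_subset)
    with N show "\<exists>N. openin Y N \<and> y \<in> N \<and> finite {V \<in> \<V>. V \<inter> N \<noteq> {}}" by blast
  qed
  moreover have "topspace Y \<subseteq> \<Union>\<V>"
  proof
    fix y assume "y \<in> topspace Y"
    then obtain S where "S \<in> \<F>" "y \<in> S" using covF by blast
    with SE u show "y \<in> \<Union>\<V>" unfolding \<V>_def by blast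
  qed
  moreover have "openin Y V" if "V \<in> \<V>" for V
    using that opE opU u unfolding \<V>_def by (auto intro: openin_Int)
  moreover have "\<exists>U\<in>\<U>. V \<subseteq> U" if "V \<in> \<V>" for V
    using that u unfolding \<V>_def by blast
  ultimately show "\<exists>\<V>. (\<forall>V\<in>\<V>. openin Y V) \<and> topspace Y \<subseteq> \<Union>\<V> \<and>
                     (\<forall>V\<in>\<V>. \<exists>U\<in>\<U>. V \<subseteq> U) \<and> locally_finite_in Y \<V>"
    by blast
qed

lemma paracompact_space_perfect_map_image:
  assumes "paracompact_space X" "Hausdorff_space X" "perfect_map X Y f"
  shows "paracompact_space Y"
  using assms
  by (meson closed_refinement_imp_paracompact_space closed_refinement_space_perfect_map_image
      paracompact_Hausdorff_imp_regular_space paracompact_regular_imp_closed_refinement_space)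

lemma openin_orbit_space:
  "openin (orbit_space act) U \<longleftrightarrow> U \<subseteq> range (orbit_map act) \<and> open (orbit_map act -` U)"
proof -
  have "istopology (\<lambda>U. U \<subseteq> range (orbit_map act) \<and> open (orbit_map act -` U))"
    unfolding istopology_def by (auto simp: vimage_Union intro!: open_UN)
  then show ?thesis unfolding orbit_space_def by simp
qed

lemma topspace_orbit_space: "topspace (orbit_space act) = range (orbit_map act)"
proof
  show "topspace (orbit_space act) \<subseteq> range (orbit_map act)"
    unfolding topspace_def openin_orbit_space by blast
  have "openin (orbit_space act) (range (orbit_map act))"
    unfolding openin_orbit_space by (auto simp: vimage_def)
  then show "range (orbit_map act) \<subseteq> topspace (orbit_space act)"
    by (rule openin_subset)
qed

lemma closedin_orbit_space:
  "closedin (orbit_space act) C \<longleftrightarrow> C \<subseteq> range (orbit_map act) \<and> closed (orbit_map act -` C)"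
proof -
  have "orbit_map act -` range (orbit_map act) = UNIV" by blast
  then show ?thesis
    by (auto simp: closedin_def topspace_orbit_space openin_orbit_space vimage_Diff closed_def
        Compl_eq_Diff_UNIV)
qed

lemma continuous_map_orbit_map: "continuous_map euclidean (orbit_space act) (orbit_map act)"
  by (auto simp: continuous_map_def topspace_orbit_space openin_orbit_space vimage_def)

lemma transporter_closure_memI:
  assumes "y \<in> B" "act y g \<in> A"
  shows "g \<in> closure (transporter act A B)"
proof -
  have "act y g \<in> (\<lambda>x. act x g) ` B" using assms(1) by (rule imageI)
  with assms(2) have "g \<in> transporter act A B" unfolding transporter_def by blast
  then show ?thesis using closure_subset by blast
qed

context
  fixes act :: "'x::topological_space \<Rightarrow> 'g::topological_group_add \<Rightarrow> 'x"
  assumes action: "cont_right_action act"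
begin

lemma act_zero [simp]: "act x 0 = x"
  using action by (simp add: cont_right_action_def)

lemma act_act [simp]: "act (act x g) h = act x (g + h)"
  using action by (simp add: cont_right_action_def)

lemma continuous_on_act: "continuous_on UNIV (\<lambda>(x, g). act x g)"
  using action by (simp add: cont_right_action_def)

lemma continuous_on_act_point: "continuous_on S (act x)"
proof -
  have "continuous_on UNIV (\<lambda>g. (\<lambda>(x, g). act x g) (x, g))"
    by (rule continuous_on_compose2[OF continuous_on_act]) (auto intro!: continuous_intros)
  then have "continuous_on UNIV (act x)" by simp
  then show ?thesis by (rule continuous_on_subset) simp
qed

lemma orbit_map_eq_iff: "orbit_map act y = orbit_map act x \<longleftrightarrow> (\<exists>g. y = act x g)"
proof
  assume "orbit_map act y = orbit_map act x"
  moreover have "y \<in> orbit_map act y" unfolding orbit_map_def by (metis act_zero rangeI)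
  ultimately show "\<exists>g. y = act x g" unfolding orbit_map_def by auto
next
  assume "\<exists>g. y = act x g"
  then obtain g where g: "y = act x g" by blast
  have "act x h = act y (- g + h)" for h by (simp add: g add.assoc[symmetric])
  then have "range (act x) \<subseteq> range (act y)" by (metis image_subsetI rangeI)
  moreover have "range (act y) \<subseteq> range (act x)" using g by auto
  ultimately show "orbit_map act y = orbit_map act x"
    unfolding orbit_map_def by (rule subset_antisym[symmetric])
qed

lemma orbit_map_act [simp]: "orbit_map act (act x g) = orbit_map act x"
  using orbit_map_eq_iff by blast

lemma orbit_map_vimage_image:
  "orbit_map act -` orbit_map act ` C = {y. \<exists>c\<in>C. \<exists>g. y = act c g}"
  by (auto simp: orbit_map_eq_iff)

text \<open>For x outside the saturation of C take V_x, V_F from F-properness and let K be the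
  compact closure of the transporter. The open set of pairs (y, g) with act y g outside C contains
  {x} \<times> K, hence by the tube lemma some W \<times> K with x \<in> W. If y = act c g were in V_x \<inter> W
  with c \<in> C, then act y (- g) = c \<in> V_F would put - g into K, a contradiction.\<close>
lemma closed_saturation_if_F_proper:
  assumes CF: "C \<subseteq> F" and C: "closed C" and FP: "F_proper act F"
  shows "closed (orbit_map act -` orbit_map act ` C)"
proof -
  define S where "S = {y. \<exists>c\<in>C. \<exists>g. y = act c g}"
  define P where "P = (\<lambda>(x, g). act x g) -` (- C)"
  have "open P"
    unfolding P_def using C continuous_on_act by (intro open_vimage) (auto simp: open_Compl)
  have "\<exists>T. open T \<and> x \<in> T \<and> T \<subseteq> - S" if x: "x \<in> - S" for x
  proof -
    obtain Vx VF where V: "open Vx" "x \<in> Vx" "F \<subseteq> VF"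
      and K: "compact (closure (transporter act VF Vx))"
      using FP unfolding F_proper_def perp_def by blast
    define K where "K = closure (transporter act VF Vx)"
    have "act x g \<notin> C" for g
    proof
      assume "act x g \<in> C"
      moreover have "x = act (act x g) (- g)" by simp
      ultimately show False using x unfolding S_def by blast
    qed
    then have "{x} \<times> K \<subseteq> P" unfolding P_def by auto
    then obtain X0 where X0: "x \<in> X0" "open X0" "X0 \<times> K \<subseteq> P"
      using Elementary_Topology.tube_lemma[OF K[folded K_def] \<open>open P\<close>] by blast
    have "Vx \<inter> X0 \<subseteq> - S"
    proof
      fix y assume y: "y \<in> Vx \<inter> X0"
      show "y \<in> - S"
      proof
        assume "y \<in> S"
        then obtain c g where c: "c \<in> C" "y = act c g" unfolding S_def by blast
        then have "act y (- g) = c" by simp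
        with c(1) CF V(3) have "act y (- g) \<in> VF" by blast
        with y have "- g \<in> K" unfolding K_def by (blast intro: transporter_closure_memI)
        with y X0(3) have "(y, - g) \<in> P" by blast
        with \<open>act y (- g) = c\<close> c show False unfolding P_def by simp
      qed
    qed
    with V X0 show ?thesis by (meson open_Int IntI)
  qed
  then have "open (- S)" by (subst open_subopen) blast
  then show ?thesis unfolding orbit_map_vimage_image S_def[symmetric] by (simp add: closed_def)
qed

lemma compact_orbit_fibre_if_F_proper:
  assumes F: "closed F" and FP: "F_proper act F"
  shows "compact {x \<in> F. orbit_map act x = orbit_map act x0}"
proof -
  obtain Vx VF where V: "x0 \<in> Vx" "F \<subseteq> VF" and K: "compact (closure (transporter act VF Vx))"
    using FP unfolding F_proper_def perp_def by blast
  define K where "K = closure (transporter act VF Vx)"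
  have "{x \<in> F. orbit_map act x = orbit_map act x0} = F \<inter> act x0 ` K"
  proof -
    have "g \<in> K" if "act x0 g \<in> F" for g
      using V that unfolding K_def by (blast intro: transporter_closure_memI)
    then show ?thesis by (auto simp: orbit_map_eq_iff)
  qed
  moreover have "compact (act x0 ` K)"
    using K unfolding K_def by (rule compact_continuous_image[OF continuous_on_act_point])
  ultimately show ?thesis using F by (simp add: closed_Int_compact)
qed

lemma perfect_map_orbit_map_if_F_proper:
  assumes F: "closed F" and FP: "F_proper act F"
  shows "perfect_map (top_of_set F) (subtopology (orbit_space act) (orbit_map act ` F))
           (orbit_map act)"
  unfolding perfect_map_def proper_map_def
proof (intro conjI ballI)
  show "continuous_map (top_of_set F) (subtopology (orbit_space act) (orbit_map act ` F))
          (orbit_map act)"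
    by (simp add: continuous_map_from_subtopology continuous_map_in_subtopology
        continuous_map_orbit_map image_mono)
  show "orbit_map act ` topspace (top_of_set F) =
          topspace (subtopology (orbit_space act) (orbit_map act ` F))"
    by (auto simp: topspace_orbit_space)
  show "closed_map (top_of_set F) (subtopology (orbit_space act) (orbit_map act ` F))
          (orbit_map act)"
    unfolding closed_map_def
  proof (intro allI impI)
    fix C assume "closedin (top_of_set F) C"
    then have "C \<subseteq> F" "closed C"
      using F closedin_closed_trans closedin_subset by fastforce+
    then have "closedin (orbit_space act) (orbit_map act ` C)"
      by (auto simp: closedin_orbit_space closed_saturation_if_F_proper FP)
    with \<open>C \<subseteq> F\<close>
    show "closedin (subtopology (orbit_space act) (orbit_map act ` F)) (orbit_map act ` C)"
      by (auto simp: closedin_subtopology)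
  qed
next
  fix y assume "y \<in> topspace (subtopology (orbit_space act) (orbit_map act ` F))"
  then obtain x0 where "x0 \<in> F" "y = orbit_map act x0" by auto
  then show "compactin (top_of_set F)
               {x \<in> topspace (top_of_set F). orbit_map act x = y}"
    using compact_orbit_fibre_if_F_proper[OF F FP, of x0] by (auto simp: compactin_subtopology)
qed

end

theorem lemma2p13:
  fixes act :: "'x::t2_space \<Rightarrow> 'g::{topological_group_add, t2_space} \<Rightarrow> 'x"
    and F :: "'x set"
  assumes "locally_compact_space (euclidean :: 'g topology)"
    and "cont_right_action act"
    and "bourbaki_proper act"
    and "closed F"
    and "F_proper act F"
    and "paracompact_space (top_of_set F)"
  shows "paracompact_space (subtopology (orbit_space act) (orbit_map act ` F))"
proof (rule paracompact_space_perfect_map_image)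
  show "paracompact_space (top_of_set F)" by fact
  show "Hausdorff_space (top_of_set F)"
    by (intro Hausdorff_space_subtopology) (simp add: Hausdorff_space_def disjnt_def, metis hausdorff)
  show "perfect_map (top_of_set F) (subtopology (orbit_space act) (orbit_map act ` F))
          (orbit_map act)"
    using assms(2,4,5) by (rule perfect_map_orbit_map_if_F_proper)
qed

end
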